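(* Let $G$ be a group with a gliding system $(\mathcal{G},\mathcal{I})$ such that there is an upper bound on the cardinality of sets of pairwise independent glides. Let $\mathcal{D}\subset G$ be an oriented regular set satisfying the square condition. Then for every $A\in\mathcal{D}$ the typing homomorphism $\mu_A:\pi_1(X_{\mathcal{D}},A)\to\mathcal{A}(G)$ is injective.
   Context: Gliding system $(\mathcal{G},\mathcal{I})$ in $G$: $\mathcal{G}\subset G\setminus\{1\}$ closed under inversion (glides), $\mathcal{I}\subset\mathcal{G}\times\mathcal{G}$ (independence) with $(s^{-1},t),(t,s)\in\mathcal{I}$ and $st=ts\ne1$ whenever $(s,t)\in\mathcal{I}$. Pre-cubic set: finite set $S$ of pairwise independent glides, $[S]=\prod_{s\in S}s$; cubic: pre-cubic with $[T_1]\ne[T_2]$ for distinct $T_1,T_2\subset S$. Glide complex $X_G$: cubed complex with one $k$-cube for each equivalence class of based cubes $(A,S)$ ($A\in G$, $S$ cubic of size $k$) under $(A,S)\sim([T]A,(S\setminus T)\cup\{t^{-1}:t\in T\})$; vertices $[T]A$, faces the cubes of $(A,S')$, $S'\subset S$; in particular 1-cells join $A$ and $sA$ for glides $s$. $X_{\mathcal{D}}$: subcomplex of cubes all of whose vertices lie in $\mathcal{D}$. $\mathcal{D}$ is regular if for every $A\in\mathcal{D}$ every pre-cubic $S$ with $sA\in\mathcal{D}$ ($s\in S$) and $stA\in\mathcal{D}$ (distinct $s,t\in S$) is cubic. Square condition: for $A\in\mathcal{D}$ and independent $s,t$ with $sA,tA\in\mathcal{D}$, $stA\in\mathcal{D}$.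 $\mathcal{A}(G)$ is the right-angled Artin group with generators $g_s$ ($s\in\mathcal{G}$) and relations $g_sg_t=g_tg_s$ for $(s,t)\in\mathcal{I}$. An orientation of $\mathcal{D}$ is a choice of direction of every 1-cell of $X_{\mathcal{D}}$ such that for every square with vertices $A,sA,tA,stA\in\mathcal{D}$ ($s,t$ independent), the 1-cells $A$–$sA$ and $tA$–$stA$ are either both directed towards $sA,stA$ or both towards $A,tA$ (and the same with $s,t$ exchanged); $\mathcal{D}$ is oriented if an orientation is fixed. For a 1-cell $e$ directed from $A$ to $B$ set $|e|=BA^{-1}\in\mathcal{G}$. For an edge path $\alpha$ through consecutive 1-cells $e_1,\dots,e_n$, with $\nu_k=+1$ if the path traverses $e_k$ along its orientation and $-1$ otherwise, put $\mu(\alpha)=g_{|e_1|}^{\nu_1}\cdots g_{|e_n|}^{\nu_n}$; this is invariant under homotopy rel endpoints and defines the typing homomorphism $\mu_A:\pi_1(X_{\mathcal{D}},A)\to\mathcal{A}(G)$. *)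

theory Defs
  imports "HOL-Algebra.Group"
begin

definition gliding_system :: "('a, 'b) monoid_scheme \<Rightarrow> 'a set \<Rightarrow> ('a \<times> 'a) set \<Rightarrow> bool" where
  "gliding_system G gl ind \<longleftrightarrow>
     gl \<subseteq> carrier G - {\<one>\<^bsub>G\<^esub>} \<and>
     (\<forall>s\<in>gl. inv\<^bsub>G\<^esub> s \<in> gl) \<and>
     ind \<subseteq> gl \<times> gl \<and>
     (\<forall>s t. (s, t) \<in> ind \<longrightarrow>
        (inv\<^bsub>G\<^esub> s, t) \<in> ind \<and> (t, s) \<in> ind \<and>
        s \<otimes>\<^bsub>G\<^esub> t = t \<otimes>\<^bsub>G\<^esub> s \<and> s \<otimes>\<^bsub>G\<^esub> t \<noteq> \<one>\<^bsub>G\<^esub>)"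

definition pairwise_indep :: "('a \<times> 'a) set \<Rightarrow> 'a set \<Rightarrow> bool" where
  "pairwise_indep ind S \<longleftrightarrow> (\<forall>s\<in>S. \<forall>t\<in>S. s \<noteq> t \<longrightarrow> (s, t) \<in> ind)"

definition precubic :: "'a set \<Rightarrow> ('a \<times> 'a) set \<Rightarrow> 'a set \<Rightarrow> bool" where
  "precubic gl ind S \<longleftrightarrow> finite S \<and> S \<subseteq> gl \<and> pairwise_indep ind S"

definition list_prod :: "('a, 'b) monoid_scheme \<Rightarrow> 'a list \<Rightarrow> 'a" where
  "list_prod G xs = foldr (\<lambda>x y. x \<otimes>\<^bsub>G\<^esub> y) xs \<one>\<^bsub>G\<^esub>"

text \<open>[S], the product of the (pairwise commuting) elements of a finite set S.\<close>
definition bracket :: "('a, 'b) monoid_scheme \<Rightarrow> 'a set \<Rightarrow> 'a" where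
  "bracket G S = list_prod G (SOME xs. distinct xs \<and> set xs = S)"

definition cubic :: "('a, 'b) monoid_scheme \<Rightarrow> 'a set \<Rightarrow> ('a \<times> 'a) set \<Rightarrow> 'a set \<Rightarrow> bool" where
  "cubic G gl ind S \<longleftrightarrow> precubic gl ind S \<and>
     (\<forall>T1 T2. T1 \<subseteq> S \<and> T2 \<subseteq> S \<and> T1 \<noteq> T2 \<longrightarrow> bracket G T1 \<noteq> bracket G T2)"

definition regular_set :: "('a, 'b) monoid_scheme \<Rightarrow> 'a set \<Rightarrow> ('a \<times> 'a) set \<Rightarrow> 'a set \<Rightarrow> bool" where
  "regular_set G gl ind D \<longleftrightarrow>
     (\<forall>A\<in>D. \<forall>S. precubic gl ind S \<and> (\<forall>s\<in>S. s \<otimes>\<^bsub>G\<^esub> A \<in> D) \<and>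
        (\<forall>s\<in>S. \<forall>t\<in>S. s \<noteq> t \<longrightarrow> s \<otimes>\<^bsub>G\<^esub> t \<otimes>\<^bsub>G\<^esub> A \<in> D)
        \<longrightarrow> cubic G gl ind S)"

definition square_condition :: "('a, 'b) monoid_scheme \<Rightarrow> ('a \<times> 'a) set \<Rightarrow> 'a set \<Rightarrow> bool" where
  "square_condition G ind D \<longleftrightarrow>
     (\<forall>A\<in>D. \<forall>s t. (s, t) \<in> ind \<and> s \<otimes>\<^bsub>G\<^esub> A \<in> D \<and> t \<otimes>\<^bsub>G\<^esub> A \<in> D
        \<longrightarrow> s \<otimes>\<^bsub>G\<^esub> t \<otimes>\<^bsub>G\<^esub> A \<in> D)"

text \<open>1-cells of the glide complex: A and B are joined iff B A^{-1} is a glide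
  (the 1-cube (A,{s}) joins A and sA; it is determined by its endpoints).
  A 1-cell lies in X_D iff both endpoints are in D.\<close>
definition edge_in :: "('a, 'b) monoid_scheme \<Rightarrow> 'a set \<Rightarrow> 'a set \<Rightarrow> 'a \<Rightarrow> 'a \<Rightarrow> bool" where
  "edge_in G gl D u v \<longleftrightarrow> u \<in> D \<and> v \<in> D \<and> v \<otimes>\<^bsub>G\<^esub> inv\<^bsub>G\<^esub> u \<in> gl"

text \<open>2-cells of X_D: squares with vertices A, sA, tA, stA in D, s,t distinct independent.\<close>
definition square_in :: "('a, 'b) monoid_scheme \<Rightarrow> ('a \<times> 'a) set \<Rightarrow> 'a set \<Rightarrow> 'a \<Rightarrow> 'a \<Rightarrow> 'a \<Rightarrow> bool" where
  "square_in G ind D A s t \<longleftrightarrow> (s, t) \<in> ind \<and> s \<noteq> t \<and> A \<in> D \<and>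
     s \<otimes>\<^bsub>G\<^esub> A \<in> D \<and> t \<otimes>\<^bsub>G\<^esub> A \<in> D \<and> s \<otimes>\<^bsub>G\<^esub> (t \<otimes>\<^bsub>G\<^esub> A) \<in> D"

text \<open>Orientation: ori u v means the 1-cell joining u and v is directed from u to v.\<close>
definition orientation :: "('a, 'b) monoid_scheme \<Rightarrow> 'a set \<Rightarrow> ('a \<times> 'a) set \<Rightarrow> 'a set
     \<Rightarrow> ('a \<Rightarrow> 'a \<Rightarrow> bool) \<Rightarrow> bool" where
  "orientation G gl ind D ori \<longleftrightarrow>
     (\<forall>u v. ori u v \<longrightarrow> edge_in G gl D u v) \<and>
     (\<forall>u v. edge_in G gl D u v \<longrightarrow> (ori u v \<longleftrightarrow> \<not> ori v u)) \<and>
     (\<forall>A s t. square_in G ind D A s t \<longrightarrow>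
        (ori A (s \<otimes>\<^bsub>G\<^esub> A) \<longleftrightarrow> ori (t \<otimes>\<^bsub>G\<^esub> A) (s \<otimes>\<^bsub>G\<^esub> (t \<otimes>\<^bsub>G\<^esub> A))))"

definition edge_path :: "('a, 'b) monoid_scheme \<Rightarrow> 'a set \<Rightarrow> 'a set \<Rightarrow> 'a list \<Rightarrow> bool" where
  "edge_path G gl D p \<longleftrightarrow> p \<noteq> [] \<and> set p \<subseteq> D \<and> successively (edge_in G gl D) p"

text \<open>Elementary homotopies of edge paths rel endpoints in X_D (2-skeleton):
  removing a backtrack, and exchanging two adjacent sides of a square for the other two.\<close>
inductive htp_step :: "('a, 'b) monoid_scheme \<Rightarrow> 'a set \<Rightarrow> ('a \<times> 'a) set \<Rightarrow> 'a set
    \<Rightarrow> 'a list \<Rightarrow> 'a list \<Rightarrow> bool" for G gl ind D where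
  backtrack: "edge_in G gl D u v \<Longrightarrow> htp_step G gl ind D (xs @ [u, v, u] @ ys) (xs @ [u] @ ys)"
| square: "square_in G ind D A s t \<Longrightarrow>
    htp_step G gl ind D (xs @ [A, s \<otimes>\<^bsub>G\<^esub> A, t \<otimes>\<^bsub>G\<^esub> (s \<otimes>\<^bsub>G\<^esub> A)] @ ys)
                        (xs @ [A, t \<otimes>\<^bsub>G\<^esub> A, s \<otimes>\<^bsub>G\<^esub> (t \<otimes>\<^bsub>G\<^esub> A)] @ ys)"

definition homotopic :: "('a, 'b) monoid_scheme \<Rightarrow> 'a set \<Rightarrow> ('a \<times> 'a) set \<Rightarrow> 'a set
    \<Rightarrow> 'a list \<Rightarrow> 'a list \<Rightarrow> bool" where
  "homotopic G gl ind D = equivclp (htp_step G gl ind D)"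

text \<open>Words in the RAAG A(G): letters (s, True) = g_s, (s, False) = g_s^{-1}.\<close>
inductive raag_step :: "('a \<times> 'a) set \<Rightarrow> ('a \<times> bool) list \<Rightarrow> ('a \<times> bool) list \<Rightarrow> bool"
  for ind where
  cancel: "raag_step ind (xs @ [(s, b), (s, \<not> b)] @ ys) (xs @ ys)"
| commute: "(s, t) \<in> ind \<Longrightarrow> raag_step ind (xs @ [(s, b), (t, c)] @ ys) (xs @ [(t, c), (s, b)] @ ys)"

definition raag_eq :: "('a \<times> 'a) set \<Rightarrow> ('a \<times> bool) list \<Rightarrow> ('a \<times> bool) list \<Rightarrow> bool" where
  "raag_eq ind = equivclp (raag_step ind)"

definition mu :: "('a, 'b) monoid_scheme \<Rightarrow> ('a \<Rightarrow> 'a \<Rightarrow> bool) \<Rightarrow> 'a list \<Rightarrow> ('a \<times> bool) list" where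
  "mu G ori p = map (\<lambda>(u, v). if ori u v then (v \<otimes>\<^bsub>G\<^esub> inv\<^bsub>G\<^esub> u, True)
                                        else (u \<otimes>\<^bsub>G\<^esub> inv\<^bsub>G\<^esub> v, False)) (zip p (tl p))"

end

theory Submission
  imports Defs
begin

text \<open>
  The proof has an algebraic and a geometric half.  Algebraically, let ~ be the
  equivalence on words generated by swapping adjacent letters whose glides are
  independent (a trace-monoid equivalence).  Modulo ~ words can be cancelled on
  the left, and from this we build a normal form NF: letters are pushed one at a
  time onto a reduced word, cancelling against an inverse letter that can be
  brought to the front.  Equality in A(G) implies ~-equivalence of normal forms.
  Geometrically, an edge path is determined by its start and its word; a swap of
  adjacent independent letters of mu(p) is realised by exchanging two sides of a
  square (square condition and orientation), and a leading cancellation by a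
  backtrack.  So every path is homotopic to one whose word is ~ NF(mu p), and
  paths from A with equal types in A(G) end up homotopic to the same path.
  Since homotopy is generated directly by the squares of X_D, only the square
  condition and the orientation are used.
\<close>

section \<open>Words modulo commutation of independent letters\<close>

inductive swap_step :: "('a \<times> 'a) set \<Rightarrow> ('a \<times> bool) list \<Rightarrow> ('a \<times> bool) list \<Rightarrow> bool"
  for ind where
  "(fst a, fst b) \<in> ind \<Longrightarrow> swap_step ind (xs @ [a, b] @ ys) (xs @ [b, a] @ ys)"

definition letter_inv :: "'a \<times> bool \<Rightarrow> 'a \<times> bool" where
  "letter_inv l = (fst l, \<not> snd l)"

lemma letter_inv_inv [simp]: "letter_inv (letter_inv l) = l"
  by (simp add: letter_inv_def)

lemma fst_letter_inv [simp]: "fst (letter_inv l) = fst l"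
  by (simp add: letter_inv_def)

text \<open>Everything about the commutation equivalence only uses that independence
  is a symmetric relation.\<close>
locale symmetric_independence =
  fixes ind :: "('a \<times> 'a) set"
  assumes ind_sym: "(s, t) \<in> ind \<Longrightarrow> (t, s) \<in> ind"
begin

abbreviation comm_eq :: "('a \<times> bool) list \<Rightarrow> ('a \<times> bool) list \<Rightarrow> bool" where
  "comm_eq \<equiv> (swap_step ind)\<^sup>*\<^sup>*"

lemma comm_eq_sym: "comm_eq u v \<Longrightarrow> comm_eq v u"
proof (induction rule: rtranclp_induct)
  case (step v w)
  from step(2) obtain xs b c ys where "v = xs @ [b, c] @ ys" "w = xs @ [c, b] @ ys" "(fst b, fst c) \<in> ind"
    by (cases rule: swap_step.cases) auto
  then have "swap_step ind w v" using swap_step.intros[of c b ind xs ys] ind_sym by simp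
  then show ?case using step(3) by (rule converse_rtranclp_into_rtranclp)
qed simp

lemma comm_eq_trans: "comm_eq u v \<Longrightarrow> comm_eq v w \<Longrightarrow> comm_eq u w"
  by (rule rtranclp_trans)

lemma comm_eq_Cons: "comm_eq u v \<Longrightarrow> comm_eq (x # u) (x # v)"
proof (induction rule: rtranclp_induct)
  case (step v w)
  from step(2) have "swap_step ind (x # v) (x # w)"
    by (cases rule: swap_step.cases) (metis append_Cons swap_step.intros)
  then show ?case using step(3) by simp
qed simp

lemma comm_eq_swap: "(fst b, fst c) \<in> ind \<Longrightarrow> comm_eq (xs @ b # c # ys) (xs @ c # b # ys)"
  using swap_step.intros[of b c ind xs ys] by auto

lemma comm_eq_swap_front: "(fst a, fst b) \<in> ind \<Longrightarrow> comm_eq (a # b # w) (b # a # w)"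
  using comm_eq_swap[of a b "[]"] by simp

lemma comm_eq_length: "comm_eq u v \<Longrightarrow> length u = length v"
  by (induction rule: rtranclp_induct) (auto elim: swap_step.cases)

fun movable :: "'a \<times> bool \<Rightarrow> ('a \<times> bool) list \<Rightarrow> bool" where
  "movable a [] = False"
| "movable a (x # xs) = (x = a \<or> ((fst x, fst a) \<in> ind \<and> movable a xs))"

lemma movable_to_front: "movable a w \<Longrightarrow> comm_eq w (a # remove1 a w)"
proof (induction w)
  case (Cons x xs)
  show ?case
  proof (cases "x = a")
    case False
    with Cons.prems have xa: "(fst x, fst a) \<in> ind" and "movable a xs" by auto
    then have "comm_eq (x # xs) (x # a # remove1 a xs)" using Cons.IH by (blast intro: comm_eq_Cons)
    also have "comm_eq \<dots> (a # x # remove1 a xs)" using xa by (rule comm_eq_swap_front)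
    finally show ?thesis using False by simp
  qed simp
qed simp

lemma movable_swap:
  assumes "(fst b, fst c) \<in> ind"
  shows "(movable a (xs @ b # c # ys) \<longleftrightarrow> movable a (xs @ c # b # ys)) \<and>
    (movable a (xs @ b # c # ys) \<longrightarrow>
       comm_eq (remove1 a (xs @ b # c # ys)) (remove1 a (xs @ c # b # ys)))"
proof (induction xs)
  case Nil
  then show ?case using assms ind_sym[OF assms] by (auto intro: comm_eq_swap_front)
next
  case (Cons x xs)
  then show ?case using assms by (auto intro: comm_eq_Cons comm_eq_swap)
qed

lemma movable_comm_eq:
  assumes "comm_eq u v"
  shows "(movable a u \<longleftrightarrow> movable a v) \<and> (movable a u \<longrightarrow> comm_eq (remove1 a u) (remove1 a v))"
  using assms
proof (induction rule: rtranclp_induct)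
  case (step v w)
  from step(2) obtain xs b c ys where "v = xs @ b # c # ys" "w = xs @ c # b # ys" "(fst b, fst c) \<in> ind"
    by (cases rule: swap_step.cases) auto
  then show ?case using step(3) movable_swap[of b c a xs ys] by (auto intro: comm_eq_trans)
qed simp

lemma comm_eq_cancel_head: "comm_eq (a # u) (a # v) \<Longrightarrow> comm_eq u v"
  using movable_comm_eq[of "a # u" "a # v" a] by simp

lemma comm_eq_distinct_heads:
  assumes "comm_eq (a # u) (b # v)" "a \<noteq> b"
  shows "(fst a, fst b) \<in> ind \<and> comm_eq u (b # remove1 b u) \<and> comm_eq v (a # remove1 b u)"
proof -
  have inv: "(movable b (a # u) \<longleftrightarrow> movable b (b # v)) \<and>
      (movable b (a # u) \<longrightarrow> comm_eq (remove1 b (a # u)) (remove1 b (b # v)))"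
    by (rule movable_comm_eq[OF assms(1)])
  then have "movable b (a # u)" by simp
  then have "(fst a, fst b) \<in> ind" "movable b u" using assms(2) by auto
  moreover have "comm_eq v (a # remove1 b u)"
    using inv \<open>movable b (a # u)\<close> assms(2) by (auto intro: comm_eq_sym)
  ultimately show ?thesis using movable_to_front by blast
qed

definition starts_with :: "('a \<times> bool) list \<Rightarrow> 'a \<times> bool \<Rightarrow> bool" where
  "starts_with w l \<longleftrightarrow> (\<exists>v. comm_eq w (l # v))"

lemma starts_with_cong: "comm_eq w w' \<Longrightarrow> starts_with w l \<longleftrightarrow> starts_with w' l"
  unfolding starts_with_def by (meson comm_eq_sym comm_eq_trans)

lemma starts_with_Cons:
  assumes "starts_with z b" "(fst x, fst b) \<in> ind"
  shows "starts_with (x # z) b"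
proof -
  obtain v where "comm_eq z (b # v)" using assms(1) by (auto simp: starts_with_def)
  then have "comm_eq (x # z) (x # b # v)" by (rule comm_eq_Cons)
  also have "comm_eq \<dots> (b # x # v)" using assms(2) by (rule comm_eq_swap_front)
  finally show ?thesis by (auto simp: starts_with_def)
qed

lemma starts_with_other_head:
  assumes "starts_with (a # c) l" "l \<noteq> a"
  shows "starts_with c l"
proof -
  obtain v where "comm_eq (a # c) (l # v)" using assms(1) by (auto simp: starts_with_def)
  then show ?thesis using comm_eq_distinct_heads[of a c l v] assms(2)
    by (auto simp: starts_with_def)
qed

definition reduced :: "('a \<times> bool) list \<Rightarrow> bool" where
  "reduced w \<longleftrightarrow> (\<forall>w' xs ys l. comm_eq w w' \<longrightarrow> w' \<noteq> xs @ [l, letter_inv l] @ ys)"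

lemma reducedD: "reduced w \<Longrightarrow> comm_eq w (xs @ [l, letter_inv l] @ ys) \<Longrightarrow> False"
  unfolding reduced_def by blast

lemma reduced_Nil: "reduced []"
  unfolding reduced_def using comm_eq_length[of "[]"] by fastforce

lemma reduced_cong: "comm_eq w w' \<Longrightarrow> reduced w \<Longrightarrow> reduced w'"
  unfolding reduced_def by (blast intro: comm_eq_trans)

lemma reduced_tail: "reduced (a # w) \<Longrightarrow> reduced w"
  unfolding reduced_def by (metis append_Cons comm_eq_Cons)

lemma no_cancellation_at_front:
  assumes r: "reduced w" and ns: "\<not> starts_with w (letter_inv a)"
    and c: "comm_eq (a # w) (l # letter_inv l # ys)"
  shows False
proof (cases "l = a")
  case True
  then show False using comm_eq_cancel_head[of a w] c ns by (auto simp: starts_with_def)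
next
  case False
  from comm_eq_distinct_heads[OF c] False
  have w1: "comm_eq w (l # remove1 l w)" and w2: "comm_eq (letter_inv l # ys) (a # remove1 l w)"
    by (auto intro: comm_eq_sym)
  show False
  proof (cases "letter_inv l = a")
    case True
    then show False using w1 ns by (auto simp: starts_with_def)
  next
    case False
    from comm_eq_distinct_heads[OF w2 False]
    have "comm_eq (remove1 l w) (letter_inv l # remove1 a ys)" by blast
    then have "comm_eq w (l # letter_inv l # remove1 a ys)"
      using w1 comm_eq_Cons comm_eq_trans by blast
    then show False using reducedD[OF r, of "[]"] by simp
  qed
qed

lemma reduced_Cons:
  assumes "reduced w" "\<not> starts_with w (letter_inv a)"
  shows "reduced (a # w)"
proof -
  have False if "reduced w" "\<not> starts_with w (letter_inv a)"
      "comm_eq (a # w) (xs @ [l, letter_inv l] @ ys)" for xs w l ys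
    using that
  proof (induction xs arbitrary: w)
    case Nil
    then show ?case using no_cancellation_at_front by simp
  next
    case (Cons x xs)
    show ?case
    proof (cases "x = a")
      case True
      then show False using Cons.prems comm_eq_cancel_head reducedD by fastforce
    next
      case False
      from comm_eq_distinct_heads[of a w x] Cons.prems(3) False
      have ind: "(fst a, fst x) \<in> ind" and w1: "comm_eq w (x # remove1 x w)"
        and w2: "comm_eq (a # remove1 x w) (xs @ [l, letter_inv l] @ ys)"
        by (auto intro: comm_eq_sym)
      have "reduced (remove1 x w)" using reduced_tail reduced_cong[OF w1] Cons.prems(1) by blast
      moreover have "\<not> starts_with (remove1 x w) (letter_inv a)"
        using starts_with_Cons[of "remove1 x w" "letter_inv a" x] ind_sym[OF ind]
          starts_with_cong[OF w1] Cons.prems(2) by auto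
      ultimately show False using Cons.IH w2 by blast
    qed
  qed
  then show ?thesis using assms unfolding reduced_def by blast
qed

section \<open>A normal form for the right-angled Artin group\<close>

definition push :: "'a \<times> bool \<Rightarrow> ('a \<times> bool) list \<Rightarrow> ('a \<times> bool) list" where
  "push l w = (if starts_with w (letter_inv l) then (SOME v. comm_eq w (letter_inv l # v)) else l # w)"

definition normal_form :: "('a \<times> bool) list \<Rightarrow> ('a \<times> bool) list" where
  "normal_form w = foldr push w []"

lemma push_cancels: "starts_with w (letter_inv l) \<Longrightarrow> comm_eq w (letter_inv l # push l w)"
  unfolding push_def starts_with_def by (auto intro: someI)

lemma push_prepends: "\<not> starts_with w (letter_inv l) \<Longrightarrow> push l w = l # w"
  unfolding push_def by simp

lemma push_cong:
  assumes "comm_eq w w'"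
  shows "comm_eq (push l w) (push l w')"
proof (cases "starts_with w (letter_inv l)")
  case True
  then have "starts_with w' (letter_inv l)" using starts_with_cong[OF assms] by simp
  then have "comm_eq (letter_inv l # push l w) (letter_inv l # push l w')"
    using push_cancels True assms by (meson comm_eq_sym comm_eq_trans)
  then show ?thesis by (rule comm_eq_cancel_head)
next
  case False
  then have "\<not> starts_with w' (letter_inv l)" using starts_with_cong[OF assms] by simp
  then show ?thesis using False push_prepends comm_eq_Cons assms by metis
qed

lemma foldr_push_cong: "comm_eq w w' \<Longrightarrow> comm_eq (foldr push xs w) (foldr push xs w')"
  by (induction xs) (auto intro: push_cong)

lemma reduced_push: "reduced w \<Longrightarrow> reduced (push l w)"
  by (cases "starts_with w (letter_inv l)")
    (auto dest: push_cancels intro: reduced_tail reduced_cong reduced_Cons simp: push_prepends)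

lemma reduced_normal_form: "reduced (normal_form w)"
  unfolding normal_form_def by (induction w) (auto intro: reduced_push reduced_Nil)

lemma push_inverse_pair:
  assumes r: "reduced c"
  shows "comm_eq (push l (push (letter_inv l) c)) c"
proof (cases "starts_with c l")
  case True
  then have c0: "comm_eq c (l # push (letter_inv l) c)" using push_cancels[of c "letter_inv l"] by simp
  have "\<not> starts_with (push (letter_inv l) c) (letter_inv l)"
  proof
    assume "starts_with (push (letter_inv l) c) (letter_inv l)"
    then obtain v where "comm_eq (push (letter_inv l) c) (letter_inv l # v)"
      by (auto simp: starts_with_def)
    then have "comm_eq c (l # letter_inv l # v)" using c0 comm_eq_Cons comm_eq_trans by blast
    then show False using reducedD[OF r, of "[]"] by simp
  qed
  then show ?thesis using push_prepends c0 comm_eq_sym by metis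
next
  case False
  then have "push (letter_inv l) c = letter_inv l # c" using push_prepends[of c "letter_inv l"] by simp
  moreover have "comm_eq (letter_inv l # c) (letter_inv l # push l (letter_inv l # c))"
    using push_cancels[of "letter_inv l # c" l] by (auto simp: starts_with_def)
  ultimately show ?thesis using comm_eq_cancel_head comm_eq_sym by metis
qed

lemma push_commute_both_cancel:
  assumes ab: "a \<noteq> b" and i: "(fst a, fst b) \<in> ind"
    and pa: "starts_with c (letter_inv a)" and pb: "starts_with c (letter_inv b)"
  shows "comm_eq (push a (push b c)) (push b (push a c))"
proof -
  have c0: "comm_eq c (letter_inv b # push b c)" and c1: "comm_eq c (letter_inv a # push a c)"
    using push_cancels pa pb by auto
  have e: "comm_eq (letter_inv b # push b c) (letter_inv a # push a c)"
    using c0 c1 comm_eq_sym comm_eq_trans by blast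
  have ne: "letter_inv b \<noteq> letter_inv a" using ab by (metis letter_inv_inv)
  have sa: "starts_with (push b c) (letter_inv a)"
    using comm_eq_distinct_heads[OF e ne] by (auto simp: starts_with_def)
  have sb: "starts_with (push a c) (letter_inv b)"
    using comm_eq_distinct_heads[OF comm_eq_sym[OF e] ne[symmetric]] by (auto simp: starts_with_def)
  have "comm_eq c (letter_inv b # letter_inv a # push a (push b c))"
    using c0 comm_eq_Cons[OF push_cancels[OF sa]] by (rule comm_eq_trans)
  moreover have "comm_eq c (letter_inv a # letter_inv b # push b (push a c))"
    using c1 comm_eq_Cons[OF push_cancels[OF sb]] by (rule comm_eq_trans)
  moreover have "comm_eq (letter_inv b # letter_inv a # push a (push b c))
      (letter_inv a # letter_inv b # push a (push b c))"
    using ind_sym[OF i] by (intro comm_eq_swap_front) simp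
  ultimately have "comm_eq (letter_inv a # letter_inv b # push a (push b c))
      (letter_inv a # letter_inv b # push b (push a c))"
    using comm_eq_sym comm_eq_trans by blast
  then show ?thesis using comm_eq_cancel_head by blast
qed

lemma push_commute_one_cancels:
  assumes i: "(fst a, fst b) \<in> ind" and pb: "starts_with c (letter_inv b)"
    and npa: "\<not> starts_with c (letter_inv a)"
  shows "comm_eq (push a (push b c)) (push b (push a c))"
proof -
  define v where "v = push b c"
  have c0: "comm_eq c (letter_inv b # v)" using push_cancels[OF pb] v_def by simp
  have "\<not> starts_with v (letter_inv a)"
    using starts_with_Cons[of v "letter_inv a" "letter_inv b"] ind_sym[OF i]
      starts_with_cong[OF c0] npa by auto
  then have e1: "push a v = a # v" by (rule push_prepends)
  have e2: "push a c = a # c" using npa by (rule push_prepends)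
  have "comm_eq (a # c) (a # letter_inv b # v)" using c0 by (rule comm_eq_Cons)
  also have "comm_eq \<dots> (letter_inv b # a # v)" using i by (intro comm_eq_swap_front) simp
  finally have ac: "comm_eq (a # c) (letter_inv b # a # v)" .
  then have "starts_with (a # c) (letter_inv b)" by (auto simp: starts_with_def)
  then have "comm_eq (letter_inv b # a # v) (letter_inv b # push b (a # c))"
    using comm_eq_sym[OF ac] push_cancels by (blast intro: comm_eq_trans)
  then have "comm_eq (a # v) (push b (a # c))" by (rule comm_eq_cancel_head)
  then show ?thesis using e1 e2 v_def by simp
qed

lemma push_commute_none_cancels:
  assumes i: "(fst a, fst b) \<in> ind"
    and npa: "\<not> starts_with c (letter_inv a)" and npb: "\<not> starts_with c (letter_inv b)"
  shows "comm_eq (push a (push b c)) (push b (push a c))"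
proof -
  have eb: "push b c = b # c" and ea: "push a c = a # c" using npa npb push_prepends by auto
  show ?thesis
  proof (cases "b = letter_inv a")
    case True
    have "comm_eq (b # c) (letter_inv a # push a (b # c))"
      and "comm_eq (a # c) (letter_inv b # push b (a # c))"
      using push_cancels[of "b # c" a] push_cancels[of "a # c" b] True by (auto simp: starts_with_def)
    then have "comm_eq c (push a (b # c))" "comm_eq c (push b (a # c))"
      using True comm_eq_cancel_head by auto
    then show ?thesis using ea eb comm_eq_sym comm_eq_trans by metis
  next
    case False
    then have "\<not> starts_with (b # c) (letter_inv a)" "\<not> starts_with (a # c) (letter_inv b)"
      using starts_with_other_head npa npb by (metis letter_inv_inv)+
    then show ?thesis using ea eb push_prepends comm_eq_swap_front[OF i] by simp
  qed
qed

lemma push_commute: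
  assumes "(fst a, fst b) \<in> ind"
  shows "comm_eq (push a (push b c)) (push b (push a c))"
proof (cases "a = b")
  case False
  then show ?thesis
    using push_commute_both_cancel push_commute_one_cancels push_commute_none_cancels
      assms ind_sym[OF assms] comm_eq_sym by metis
qed simp

lemma normal_form_raag_step: "raag_step ind w w' \<Longrightarrow> comm_eq (normal_form w) (normal_form w')"
proof (induction rule: raag_step.induct)
  case (cancel xs s b ys)
  have "comm_eq (push (s, b) (push (letter_inv (s, b)) (normal_form ys))) (normal_form ys)"
    by (rule push_inverse_pair[OF reduced_normal_form])
  then show ?case unfolding normal_form_def using foldr_push_cong by (simp add: letter_inv_def)
next
  case (commute s t xs b c ys)
  then have "comm_eq (push (s, b) (push (t, c) (normal_form ys))) (push (t, c) (push (s, b) (normal_form ys)))"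
    by (intro push_commute) simp
  then show ?case unfolding normal_form_def using foldr_push_cong by simp
qed

lemma normal_form_raag_eq: "raag_eq ind w w' \<Longrightarrow> comm_eq (normal_form w) (normal_form w')"
  unfolding raag_eq_def
proof (induction rule: equivclp_induct)
  case (step y z)
  then have "comm_eq (normal_form y) (normal_form z)"
    using normal_form_raag_step comm_eq_sym by blast
  then show ?case using step(3) comm_eq_trans by blast
qed simp

end

section \<open>Edge paths in X_D and their types\<close>

locale oriented_glide_set = group +
  fixes gl :: "'a set" and ind :: "('a \<times> 'a) set" and D :: "'a set"
    and ori :: "'a \<Rightarrow> 'a \<Rightarrow> bool"
  assumes gliding: "gliding_system G gl ind"
    and D_carrier: "D \<subseteq> carrier G"
    and squares: "square_condition G ind D"
    and oriented: "orientation G gl ind D ori"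
begin

lemma ind_props:
  "(s, t) \<in> ind \<Longrightarrow> s \<in> gl \<and> t \<in> gl \<and> s \<in> carrier G \<and> t \<in> carrier G \<and>
     (inv s, t) \<in> ind \<and> (t, s) \<in> ind \<and> s \<otimes> t = t \<otimes> s \<and> s \<otimes> t \<noteq> \<one>"
  using gliding unfolding gliding_system_def by blast

sublocale symmetric_independence ind
  by unfold_locales (use ind_props in blast)

lemma ind_inv_closed:
  assumes i: "(s', t') \<in> ind" and "s' = s \<or> s' = inv s" "t' = t \<or> t' = inv t"
    and "s \<in> carrier G" "t \<in> carrier G"
  shows "(s, t) \<in> ind"
proof -
  have "(inv s', t') \<in> ind" "(inv t', s') \<in> ind" using i ind_props by blast+
  then have "(s', inv t') \<in> ind" "(inv s', inv t') \<in> ind" using ind_props by blast+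
  then show ?thesis using assms \<open>(inv s', t') \<in> ind\<close> by auto
qed

definition letter :: "'a \<Rightarrow> 'a \<Rightarrow> 'a \<times> bool" where
  "letter u v = (if ori u v then (v \<otimes> inv u, True) else (u \<otimes> inv v, False))"

definition step_target :: "'a \<Rightarrow> 'a \<times> bool \<Rightarrow> 'a" where
  "step_target u l = (if snd l then fst l \<otimes> u else inv (fst l) \<otimes> u)"

lemma step_target_letter: "u \<in> carrier G \<Longrightarrow> v \<in> carrier G \<Longrightarrow> step_target u (letter u v) = v"
  by (auto simp: step_target_def letter_def inv_mult_group m_assoc)

lemma step_target_letter_inv:
  "u \<in> carrier G \<Longrightarrow> v \<in> carrier G \<Longrightarrow> step_target v (letter_inv (letter u v)) = u"
  by (auto simp: step_target_def letter_def letter_inv_def inv_mult_group m_assoc)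

lemma fst_letter: "u \<in> carrier G \<Longrightarrow> v \<in> carrier G \<Longrightarrow>
    fst (letter u v) = v \<otimes> inv u \<or> fst (letter u v) = inv (v \<otimes> inv u)"
  by (simp add: letter_def inv_mult_group m_assoc)

text \<open>Two edges translating by the same glide g carry the same letter when they
  are oriented alike; this is where the orientation of squares enters.\<close>
lemma letter_parallel:
  assumes "g \<in> carrier G" "u \<in> carrier G" "u' \<in> carrier G"
    and "ori u (g \<otimes> u) \<longleftrightarrow> ori u' (g \<otimes> u')"
  shows "letter u (g \<otimes> u) = letter u' (g \<otimes> u')"
proof -
  have "(g \<otimes> y) \<otimes> inv y = g" if "y \<in> carrier G" for y
    using that assms(1) by (simp add: m_assoc)
  moreover have "y \<otimes> inv (g \<otimes> y) = inv g" if "y \<in> carrier G" for y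
    using that assms(1) by (simp add: inv_mult_group m_assoc[symmetric])
  ultimately show ?thesis using assms by (simp add: letter_def)
qed

lemma mu_single [simp]: "mu G ori [u] = []"
  and mu_Cons2 [simp]: "mu G ori (u # v # r) = letter u v # mu G ori (v # r)"
  by (simp_all add: mu_def letter_def)

lemma length_mu: "length (mu G ori p) = length p - 1"
  by (simp add: mu_def)

lemma edge_path_Cons2:
  "edge_path G gl D (u # v # r) \<longleftrightarrow> edge_in G gl D u v \<and> edge_path G gl D (v # r)"
  by (auto simp: edge_path_def edge_in_def)

lemma edge_in_carrier: "edge_in G gl D u v \<Longrightarrow> u \<in> carrier G \<and> v \<in> carrier G"
  using D_carrier by (auto simp: edge_in_def)

lemma edge_path_determined:
  "edge_path G gl D p \<Longrightarrow> edge_path G gl D q \<Longrightarrow> hd p = hd q \<Longrightarrow> mu G ori p = mu G ori q \<Longrightarrow> p = q"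
proof (induction p arbitrary: q rule: induct_list012)
  case (2 u)
  then obtain r where q: "q = u # r" by (cases q) (auto simp: edge_path_def)
  show ?case using "2.prems"(4) q by (cases r) auto
next
  case (3 u v r)
  obtain r0 where "q = u # r0" using "3.prems"(2,3) by (cases q) (auto simp: edge_path_def)
  then obtain v' r' where q: "q = u # v' # r'" using "3.prems"(4) by (cases r0) auto
  have e: "edge_in G gl D u v" "edge_in G gl D u v'"
    and p: "edge_path G gl D (v # r)" "edge_path G gl D (v' # r')"
    using "3.prems"(1,2) q edge_path_Cons2 by blast+
  have l: "letter u v = letter u v'" and mu: "mu G ori (v # r) = mu G ori (v' # r')"
    using "3.prems"(4) q by simp_all
  have "v = v'"
    using step_target_letter[of u v] step_target_letter[of u v'] l
      edge_in_carrier[OF e(1)] edge_in_carrier[OF e(2)] by metis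
  then have "v # r = v' # r'" using "3.IH"(2)[OF p _ mu] by simp
  then show ?case using q by simp
qed (simp add: edge_path_def)

lemma htp_step_Cons: "htp_step G gl ind D p q \<Longrightarrow> htp_step G gl ind D (u # p) (u # q)"
proof (induction rule: htp_step.induct)
  case (backtrack a b xs ys)
  then show ?case using htp_step.backtrack[where xs="u # xs" and ys=ys and ind=ind] by simp
next
  case (square A s t xs ys)
  then show ?case using htp_step.square[where xs="u # xs" and ys=ys and gl=gl] by simp
qed

lemma homotopic_Cons: "homotopic G gl ind D p q \<Longrightarrow> homotopic G gl ind D (u # p) (u # q)"
  unfolding homotopic_def
proof (induction rule: equivclp_induct)
  case (step y z)
  then show ?case using htp_step_Cons equivclp_into_equivclp by metis
qed simp

lemma homotopic_trans:
  "homotopic G gl ind D p q \<Longrightarrow> homotopic G gl ind D q r \<Longrightarrow> homotopic G gl ind D p r"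
  unfolding homotopic_def by (rule equivclp_trans)

section \<open>Lifting word manipulations to homotopies\<close>

lemma independent_edges_square:
  assumes e1: "edge_in G gl D u (\<sigma> \<otimes> u)" and e2: "edge_in G gl D (\<sigma> \<otimes> u) (\<tau> \<otimes> (\<sigma> \<otimes> u))"
    and i: "(\<sigma>, \<tau>) \<in> ind"
  shows "square_in G ind D u \<sigma> \<tau>" "square_in G ind D u \<tau> \<sigma>"
proof -
  have sc: "\<sigma> \<in> carrier G" and tc: "\<tau> \<in> carrier G" and uc: "u \<in> carrier G"
    using ind_props[OF i] edge_in_carrier[OF e1] by auto
  have i': "(inv \<sigma>, \<tau>) \<in> ind" "(\<tau>, \<sigma>) \<in> ind" and comm: "\<sigma> \<otimes> \<tau> = \<tau> \<otimes> \<sigma>"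
    using ind_props[OF i] by auto
  have "\<sigma> \<noteq> \<tau>" using ind_props[OF i'(1)] sc by auto
  have D: "u \<in> D" "\<sigma> \<otimes> u \<in> D" "\<tau> \<otimes> (\<sigma> \<otimes> u) \<in> D" using e1 e2 by (auto simp: edge_in_def)
  have "inv \<sigma> \<otimes> (\<sigma> \<otimes> u) = u" using sc uc by (simp add: m_assoc[symmetric])
  then have "inv \<sigma> \<otimes> \<tau> \<otimes> (\<sigma> \<otimes> u) \<in> D"
    using squares D i'(1) unfolding square_condition_def by metis
  moreover have swap: "\<sigma> \<otimes> (\<tau> \<otimes> u) = \<tau> \<otimes> (\<sigma> \<otimes> u)"
    using sc tc uc comm by (simp add: m_assoc[symmetric])
  moreover have "inv \<sigma> \<otimes> \<tau> \<otimes> (\<sigma> \<otimes> u) = \<tau> \<otimes> u"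
  proof -
    have "inv \<sigma> \<otimes> \<tau> \<otimes> (\<sigma> \<otimes> u) = inv \<sigma> \<otimes> (\<sigma> \<otimes> (\<tau> \<otimes> u))"
      using sc tc uc by (simp add: m_assoc swap)
    also have "\<dots> = \<tau> \<otimes> u" using sc tc uc by (simp add: m_assoc[symmetric])
    finally show ?thesis .
  qed
  ultimately show "square_in G ind D u \<sigma> \<tau>" "square_in G ind D u \<tau> \<sigma>"
    using D i i'(2) \<open>\<sigma> \<noteq> \<tau>\<close> by (auto simp: square_in_def)
qed

text \<open>Swapping the first two letters of the type, when independent, is realised
  by pushing the path across a square.\<close>
lemma swap_lift_front:
  assumes ep: "edge_path G gl D (u # v # x # r)"
    and i: "(fst (letter u v), fst (letter v x)) \<in> ind"
  shows "\<exists>p'. edge_path G gl D p' \<and> hd p' = u \<and>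
    mu G ori p' = letter v x # letter u v # mu G ori (x # r) \<and> homotopic G gl ind D (u # v # x # r) p'"
proof -
  have e1: "edge_in G gl D u v" and e2: "edge_in G gl D v x" and ep3: "edge_path G gl D (x # r)"
    using ep edge_path_Cons2 by auto
  have uc: "u \<in> carrier G" and vc: "v \<in> carrier G" and xc: "x \<in> carrier G"
    using e1 e2 edge_in_carrier by auto
  define \<sigma> where "\<sigma> = v \<otimes> inv u"
  define \<tau> where "\<tau> = x \<otimes> inv v"
  have sc: "\<sigma> \<in> carrier G" and tc: "\<tau> \<in> carrier G" using uc vc xc by (auto simp: \<sigma>_def \<tau>_def)
  have st: "(\<sigma>, \<tau>) \<in> ind"
    using ind_inv_closed[OF i] fst_letter[OF uc vc] fst_letter[OF vc xc] sc tc
    by (simp add: \<sigma>_def \<tau>_def)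
  have v: "v = \<sigma> \<otimes> u" and x: "x = \<tau> \<otimes> v" using uc vc xc by (simp_all add: \<sigma>_def \<tau>_def m_assoc)
  define w where "w = \<tau> \<otimes> u"
  have x': "x = \<sigma> \<otimes> w"
    using ind_props[OF st] sc tc uc by (simp add: x v w_def m_assoc[symmetric])
  have sq: "square_in G ind D u \<sigma> \<tau>" "square_in G ind D u \<tau> \<sigma>"
    using independent_edges_square[of u \<sigma> \<tau>] e1 e2 st v x by simp_all
  have "htp_step G gl ind D ([] @ [u, \<sigma> \<otimes> u, \<tau> \<otimes> (\<sigma> \<otimes> u)] @ r) ([] @ [u, \<tau> \<otimes> u, \<sigma> \<otimes> (\<tau> \<otimes> u)] @ r)"
    by (rule htp_step.square[OF sq(1)])
  then have "homotopic G gl ind D (u # v # x # r) (u # w # x # r)"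
    using v x x' unfolding homotopic_def w_def by auto
  moreover have "edge_path G gl D (u # w # x # r)"
  proof -
    have "w \<otimes> inv u = \<tau>" "x \<otimes> inv w = \<sigma>"
      using sc tc uc by (simp_all add: x' w_def m_assoc)
    then show ?thesis using sq(1) ep3 edge_path_Cons2 ind_props[OF st] x'
      by (auto simp: square_in_def edge_in_def w_def)
  qed
  moreover have "letter u w = letter v x" "letter w x = letter u v"
  proof -
    have "ori u (\<sigma> \<otimes> u) \<longleftrightarrow> ori (\<tau> \<otimes> u) (\<sigma> \<otimes> (\<tau> \<otimes> u))"
      and "ori u (\<tau> \<otimes> u) \<longleftrightarrow> ori (\<sigma> \<otimes> u) (\<tau> \<otimes> (\<sigma> \<otimes> u))"
      using oriented sq unfolding orientation_def by blast+
    then show "letter u w = letter v x" "letter w x = letter u v"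
      using letter_parallel[of \<tau> u "\<sigma> \<otimes> u"] letter_parallel[of \<sigma> "\<tau> \<otimes> u" u] sc tc uc
      by (simp add: w_def v x, simp add: w_def x' v)
  qed
  ultimately show ?thesis by auto
qed

lemma swap_lift:
  "edge_path G gl D p \<Longrightarrow> mu G ori p = xs @ [a, b] @ ys \<Longrightarrow> (fst a, fst b) \<in> ind \<Longrightarrow>
   \<exists>p'. edge_path G gl D p' \<and> hd p' = hd p \<and> mu G ori p' = xs @ [b, a] @ ys \<and> homotopic G gl ind D p p'"
proof (induction xs arbitrary: p)
  case Nil
  then have "length p \<ge> 3" using length_mu[of p] by simp
  then obtain u v x r where p: "p = u # v # x # r"
    by (metis Suc_le_length_iff numeral_3_eq_3)
  then show ?case using swap_lift_front[of u v x r] Nil by auto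
next
  case (Cons c xs)
  then obtain u v r where p: "p = u # v # r"
    using length_mu[of p] by (cases p rule: remdups_adj.cases) auto
  have e: "edge_in G gl D u v" and ep: "edge_path G gl D (v # r)"
    using Cons.prems(1) p edge_path_Cons2 by auto
  obtain p1 where p1: "edge_path G gl D p1" "hd p1 = v" "mu G ori p1 = xs @ [b, a] @ ys"
    "homotopic G gl ind D (v # r) p1"
    using Cons.IH[OF ep] Cons.prems(2,3) p by auto
  then obtain r1 where r1: "p1 = v # r1" by (cases p1) (auto simp: edge_path_def)
  have "edge_path G gl D (u # p1)" "mu G ori (u # p1) = (c # xs) @ [b, a] @ ys"
    using e p1 r1 Cons.prems(2) p edge_path_Cons2 by auto
  moreover have "homotopic G gl ind D p (u # p1)" using homotopic_Cons[OF p1(4)] p by simp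
  ultimately show ?case using p by auto
qed

lemma comm_eq_lift:
  "comm_eq (mu G ori p) w \<Longrightarrow> edge_path G gl D p \<Longrightarrow>
   \<exists>p'. edge_path G gl D p' \<and> hd p' = hd p \<and> mu G ori p' = w \<and> homotopic G gl ind D p p'"
proof (induction rule: rtranclp_induct)
  case base
  then show ?case by (auto simp: homotopic_def)
next
  case (step y z)
  then obtain p1 where p1: "edge_path G gl D p1" "hd p1 = hd p" "mu G ori p1 = y"
    "homotopic G gl ind D p p1" by auto
  from step(2) obtain xs a b ys where "y = xs @ [a, b] @ ys" "z = xs @ [b, a] @ ys" "(fst a, fst b) \<in> ind"
    by (cases rule: swap_step.cases) auto
  then obtain p2 where "edge_path G gl D p2" "hd p2 = hd p1" "mu G ori p2 = z"
    "homotopic G gl ind D p1 p2"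
    using swap_lift[OF p1(1)] p1(3) by blast
  then show ?case using p1 homotopic_trans by metis
qed

text \<open>If the type of a path from v can be rearranged to begin with the inverse
  of the letter of an edge from u to v, then prefixing that edge produces a
  backtrack, which is removed by a homotopy.\<close>
lemma backtrack_lift:
  assumes e: "edge_in G gl D u v" and p: "edge_path G gl D p" "hd p = v"
    and c: "comm_eq (mu G ori p) (letter_inv (letter u v) # z)"
  shows "\<exists>p'. edge_path G gl D p' \<and> hd p' = u \<and> mu G ori p' = z \<and> homotopic G gl ind D (u # p) p'"
proof -
  obtain p2 where p2: "edge_path G gl D p2" "hd p2 = v" "mu G ori p2 = letter_inv (letter u v) # z"
    "homotopic G gl ind D p p2"
    using comm_eq_lift[OF c p(1)] p(2) by auto
  then obtain y r where p2e: "p2 = v # y # r"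
    using length_mu[of p2] by (cases p2 rule: remdups_adj.cases) auto
  have e2: "edge_in G gl D v y" and ep: "edge_path G gl D (y # r)"
    using p2(1) p2e edge_path_Cons2 by auto
  have "letter v y = letter_inv (letter u v)" and mu: "mu G ori (y # r) = z"
    using p2(3) p2e by simp_all
  then have "y = u"
    using step_target_letter[of v y] step_target_letter_inv[of u v] edge_in_carrier e e2 by metis
  have "htp_step G gl ind D ([] @ [u, v, u] @ r) ([] @ [u] @ r)"
    by (rule htp_step.backtrack[OF e])
  then have "homotopic G gl ind D (u # p2) (u # r)"
    using p2e \<open>y = u\<close> by (auto simp: homotopic_def intro: r_into_equivclp)
  then have "homotopic G gl ind D (u # p) (u # r)"
    using homotopic_Cons[OF p2(4)] homotopic_trans by blast
  then show ?thesis using ep mu \<open>y = u\<close> by auto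
qed

lemma normal_form_lift:
  "edge_path G gl D p \<Longrightarrow> \<exists>p'. edge_path G gl D p' \<and> hd p' = hd p \<and> homotopic G gl ind D p p' \<and>
     comm_eq (mu G ori p') (normal_form (mu G ori p))"
proof (induction p rule: induct_list012)
  case (2 u)
  then show ?case by (auto simp: homotopic_def normal_form_def)
next
  case (3 u v r)
  have e: "edge_in G gl D u v" and ep: "edge_path G gl D (v # r)"
    using "3.prems" edge_path_Cons2 by auto
  obtain p1 where p1: "edge_path G gl D p1" "hd p1 = v" "homotopic G gl ind D (v # r) p1"
    "comm_eq (mu G ori p1) (normal_form (mu G ori (v # r)))"
    using "3.IH"(2)[OF ep] by auto
  then obtain r1 where r1: "p1 = v # r1" by (cases p1) (auto simp: edge_path_def)
  define l where "l = letter u v"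
  define c where "c = normal_form (mu G ori (v # r))"
  have nf: "normal_form (mu G ori (u # v # r)) = push l c"
    by (simp add: normal_form_def l_def c_def)
  have hp1: "homotopic G gl ind D (u # v # r) (u # p1)" using homotopic_Cons[OF p1(3)] .
  show ?case
  proof (cases "starts_with c (letter_inv l)")
    case True
    then have "comm_eq (mu G ori p1) (letter_inv l # push l c)"
      using p1(4) push_cancels comm_eq_trans unfolding c_def by blast
    then obtain p' where "edge_path G gl D p'" "hd p' = u" "mu G ori p' = push l c"
      "homotopic G gl ind D (u # p1) p'"
      using backtrack_lift[OF e p1(1,2)] l_def by blast
    then show ?thesis using hp1 nf homotopic_trans by fastforce
  next
    case False
    then have "push l c = l # c" by (rule push_prepends)
    moreover have "edge_path G gl D (u # p1)" "mu G ori (u # p1) = l # mu G ori p1"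
      using e p1(1) r1 edge_path_Cons2 l_def by auto
    moreover have "comm_eq (l # mu G ori p1) (l # c)" using comm_eq_Cons p1(4) c_def by blast
    ultimately show ?thesis using hp1 nf by auto
  qed
qed (simp add: edge_path_def)

text \<open>Paths from the same vertex whose types are equal in A(G) are homotopic:
  both are homotopic to paths with equivalent types, and those paths coincide
  up to a further homotopy realising the equivalence.\<close>
lemma homotopic_if_types_equal:
  assumes p: "edge_path G gl D p" and q: "edge_path G gl D q" and hd: "hd p = hd q"
    and eq: "raag_eq ind (mu G ori p) (mu G ori q)"
  shows "homotopic G gl ind D p q"
proof -
  obtain p1 where p1: "edge_path G gl D p1" "hd p1 = hd p" "homotopic G gl ind D p p1"
    "comm_eq (mu G ori p1) (normal_form (mu G ori p))"
    using normal_form_lift[OF p] by auto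
  obtain q1 where q1: "edge_path G gl D q1" "hd q1 = hd q" "homotopic G gl ind D q q1"
    "comm_eq (mu G ori q1) (normal_form (mu G ori q))"
    using normal_form_lift[OF q] by auto
  have "comm_eq (mu G ori p1) (mu G ori q1)"
    using p1(4) normal_form_raag_eq[OF eq] comm_eq_sym[OF q1(4)] comm_eq_trans by blast
  then obtain p2 where p2: "edge_path G gl D p2" "hd p2 = hd p1" "mu G ori p2 = mu G ori q1"
    "homotopic G gl ind D p1 p2"
    using comm_eq_lift[OF _ p1(1)] by blast
  have "p2 = q1" using edge_path_determined[OF p2(1) q1(1)] p2(2,3) p1(2) q1(2) hd by simp
  then have "homotopic G gl ind D p q1" using homotopic_trans[OF p1(3) p2(4)] by simp
  moreover have "homotopic G gl ind D q1 q" using q1(3) unfolding homotopic_def by (rule equivclp_sym)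
  ultimately show ?thesis by (rule homotopic_trans)
qed

end

theorem theorem5p3:
  fixes G :: "('a, 'b) monoid_scheme" and gl :: "'a set" and ind :: "('a \<times> 'a) set"
    and D :: "'a set" and ori :: "'a \<Rightarrow> 'a \<Rightarrow> bool" and A :: 'a
  assumes "group G"
    and "gliding_system G gl ind"
    and "\<exists>N::nat. \<forall>S. S \<subseteq> gl \<and> pairwise_indep ind S \<longrightarrow> finite S \<and> card S \<le> N"
    and "D \<subseteq> carrier G"
    and "regular_set G gl ind D"
    and "square_condition G ind D"
    and "orientation G gl ind D ori"
    and "A \<in> D"
  shows "\<forall>p q. edge_path G gl D p \<and> hd p = A \<and> last p = A \<and>
               edge_path G gl D q \<and> hd q = A \<and> last q = A \<and>
               raag_eq ind (mu G ori p) (mu G ori q)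
           \<longrightarrow> homotopic G gl ind D p q"
proof -
  interpret oriented_glide_set G gl ind D ori
    using assms(1,2,4,6,7) by (simp add: oriented_glide_set_def oriented_glide_set_axioms_def)
  show ?thesis using homotopic_if_types_equal by auto
qed

end
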